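(* Let $N\ge3$ and let $M$ be the $N$-dimensional Riemannian model with pole $o$ and metric $ds^2=dr^2+\psi^2(r)d\omega^2$, where $d\omega^2$ is the round metric on $\mathbb{S}^{N-1}$ and $\psi$ is a $C^\infty$ nonnegative function on $[0,\infty)$, strictly positive on $(0,\infty)$, with $\psi(0)=\psi''(0)=0$, $\psi'(0)=1$. Set $K^{rad}_{\pi,r}=-\frac{\psi''(r)}{\psi(r)}$ and $H^{tan}_{\pi,r}=-\frac{\psi'(r)^2-1}{\psi(r)^2}$. Then for all $u\in C_c^\infty(M)$, $$\int_M|\nabla_gu|^2dv_g+\frac{(N-1)}{4}\int_M\left[2K^{rad}_{\pi,r}+(N-3)H^{tan}_{\pi,r}\right]u^2dv_g\ge\frac14\int_M\frac{u^2}{r^2}dv_g+\frac{(N-1)(N-3)}{4}\int_M\frac{u^2}{\psi^2}dv_g.$$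
   Context: $r$ is the geodesic distance from the pole $o$; $\nabla_g$, $dv_g$ are the Riemannian gradient and volume of $M$. $K^{rad}_{\pi,r}$ and $H^{tan}_{\pi,r}$ are the sectional curvatures of planes containing, respectively orthogonal to, the radial direction. *)

theory Defs
  imports "HOL-Analysis.Analysis"
begin

fun iter_dd :: "('a::real_normed_vector \<Rightarrow> real) \<Rightarrow> 'a list \<Rightarrow> 'a \<Rightarrow> real" where
  "iter_dd u [] = u"
| "iter_dd u (v # vs) = (\<lambda>x. frechet_derivative (iter_dd u vs) (at x) v)"

definition smooth_fun :: "('a::real_normed_vector \<Rightarrow> real) \<Rightarrow> bool" where
  "smooth_fun u \<longleftrightarrow> (\<forall>vs x. iter_dd u vs differentiable (at x))"

definition test_fun :: "('a::real_normed_vector \<Rightarrow> real) \<Rightarrow> bool" where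
  "test_fun u \<longleftrightarrow> smooth_fun u \<and> compact (closure {x. u x \<noteq> 0})"

text \<open>The model manifold M is realised in global geodesic polar (normal) coordinates
  about the pole o = 0: a point x of real^'n has r = norm x and angular part x / r,
  and the metric is dr^2 + psi(r)^2 d omega^2.\<close>

definition eucl_grad :: "(real ^ 'n \<Rightarrow> real) \<Rightarrow> real ^ 'n \<Rightarrow> real ^ 'n" where
  "eucl_grad u x = (\<chi> i. frechet_derivative u (at x) (axis i 1))"

definition radial_deriv :: "(real ^ 'n \<Rightarrow> real) \<Rightarrow> real ^ 'n \<Rightarrow> real" where
  "radial_deriv u x = frechet_derivative u (at x) (x /\<^sub>R norm x)"

text \<open>|grad_g u|^2 = (du/dr)^2 + psi(r)^(-2) |grad_omega u|^2, where the round-sphere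
  gradient satisfies |grad_omega u|^2 = r^2 (|grad u|^2 - (du/dr)^2).\<close>
definition model_grad_sq :: "(real \<Rightarrow> real) \<Rightarrow> (real ^ 'n \<Rightarrow> real) \<Rightarrow> real ^ 'n \<Rightarrow> real" where
  "model_grad_sq \<psi> u x =
     (radial_deriv u x)\<^sup>2
     + (norm x / \<psi> (norm x))\<^sup>2 * ((norm (eucl_grad u x))\<^sup>2 - (radial_deriv u x)\<^sup>2)"

text \<open>Riemannian volume density dv_g = (psi(r)/r)^(N-1) dx, N = CARD('n).\<close>
definition model_density :: "(real \<Rightarrow> real) \<Rightarrow> real ^ 'n \<Rightarrow> real" where
  "model_density \<psi> x = (\<psi> (norm x) / norm x) ^ (CARD('n) - 1)"

definition model_integral :: "(real \<Rightarrow> real) \<Rightarrow> (real ^ 'n \<Rightarrow> real) \<Rightarrow> real" where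
  "model_integral \<psi> f = (\<integral>x. f x * model_density \<psi> x \<partial>lborel)"

definition K_rad :: "(real \<Rightarrow> real) \<Rightarrow> real \<Rightarrow> real" where
  "K_rad \<psi> r = - deriv (deriv \<psi>) r / \<psi> r"

definition H_tan :: "(real \<Rightarrow> real) \<Rightarrow> real \<Rightarrow> real" where
  "H_tan \<psi> r = - ((deriv \<psi> r)\<^sup>2 - 1) / (\<psi> r)\<^sup>2"

end

theory Submission
  imports Defs
begin

text \<open>In polar coordinates let L(r) = 1/(2r) - (N-1) psi'(r)/(2 psi(r)) and X = L(r) d/dr.
  Completing the square, |grad_g u|^2 = u_r^2 + (r/psi)^2 (|grad u|^2 - u_r^2) \<ge> 2 u u_r L - u^2 L^2,
  and div_g(u^2 X) = 2 u u_r L + u^2 (L' + (N-1) (psi'/psi) L); the curvature terms of the statement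
  are chosen exactly so that the pointwise defect of the inequality is
  (r/psi)^2 (|grad u|^2 - u_r^2) + (u_r - u L)^2 \<ge> 0 plus the divergence term. The latter integrates
  to zero against dv_g: along each ray t^N times the flux u^2 L/r dv_g is a primitive of the
  divergence, and averaging over dilations t \<in> [1,2] (Fubini and scaling invariance of Lebesgue
  measure) kills the integral. All integrals converge because every integrand is O(r^-2) near the
  pole and N \<ge> 3.\<close>

section \<open>Smooth functions in polar coordinates\<close>

lemma frechet_derivative_real_eq_deriv:
  fixes f :: "real \<Rightarrow> real"
  assumes "f differentiable (at x)"
  shows "frechet_derivative f (at x) 1 = deriv f x"
proof -
  have "(f has_derivative frechet_derivative f (at x)) (at x)"
    using assms frechet_derivative_works by blast
  moreover have "(f has_derivative (\<lambda>h. deriv f x * h)) (at x)"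
    using assms by (simp add: DERIV_deriv_iff_real_differentiable flip: has_field_derivative_def)
  ultimately have "frechet_derivative f (at x) = (\<lambda>h. deriv f x * h)"
    by (rule has_derivative_unique)
  then show ?thesis by simp
qed

lemma smooth_fun_real_derivatives:
  fixes f :: "real \<Rightarrow> real"
  assumes "smooth_fun f"
  shows "(f has_real_derivative deriv f x) (at x)"
    and "(deriv f has_real_derivative deriv (deriv f) x) (at x)"
    and "isCont (deriv (deriv f)) x"
proof -
  have diff: "\<And>vs x. iter_dd f vs differentiable (at x)"
    using assms by (simp add: smooth_fun_def)
  have d0: "\<And>x. f differentiable (at x)" using diff[of "[]"] by simp
  have e1: "iter_dd f [1] = deriv f"
    using frechet_derivative_real_eq_deriv[OF d0] by (auto simp: fun_eq_iff)
  have d1: "\<And>x. deriv f differentiable (at x)" using diff[of "[1]"] e1 by simp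
  have e2: "iter_dd f [1,1] = deriv (deriv f)"
    using frechet_derivative_real_eq_deriv[OF d1] e1 by (auto simp: fun_eq_iff)
  have d2: "deriv (deriv f) differentiable (at x)" using diff[of "[1,1]"] e2 by simp
  show "(f has_real_derivative deriv f x) (at x)" "(deriv f has_real_derivative deriv (deriv f) x) (at x)"
    using d0 d1 DERIV_deriv_iff_real_differentiable by blast+
  show "isCont (deriv (deriv f)) x"
    using d2 by (simp add: differentiable_imp_continuous_within)
qed

lemma frechet_derivative_eq_inner_eucl_grad:
  fixes u :: "real ^ 'n \<Rightarrow> real"
  assumes "u differentiable (at y)"
  shows "frechet_derivative u (at y) v = v \<bullet> eucl_grad u y"
proof -
  have lin: "linear (frechet_derivative u (at y))"
    using assms frechet_derivative_works has_derivative_linear by blast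
  have "frechet_derivative u (at y) v = frechet_derivative u (at y) (\<Sum>i\<in>UNIV. v $ i *\<^sub>R axis i 1)"
    using basis_expansion[of v] by (simp add: scalar_mult_eq_scaleR)
  also have "\<dots> = v \<bullet> eucl_grad u y"
    using lin by (simp add: linear_sum linear_scale inner_vec_def eucl_grad_def)
  finally show ?thesis .
qed

lemma radial_deriv_eq_inner:
  "u differentiable (at y) \<Longrightarrow> radial_deriv u y = (y /\<^sub>R norm y) \<bullet> eucl_grad u y"
  by (simp add: radial_deriv_def frechet_derivative_eq_inner_eucl_grad)

lemma abs_radial_deriv_le:
  assumes "u differentiable (at y)"
  shows "\<bar>radial_deriv u y\<bar> \<le> norm (eucl_grad u y)"
proof (cases "y = 0")
  case False
  have "\<bar>radial_deriv u y\<bar> \<le> norm (y /\<^sub>R norm y) * norm (eucl_grad u y)"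
    unfolding radial_deriv_eq_inner[OF assms] by (rule Cauchy_Schwarz_ineq2)
  with False show ?thesis by simp
next
  case True
  with radial_deriv_eq_inner[OF assms] show ?thesis by simp
qed

lemma smooth_fun_differentiable: "smooth_fun u \<Longrightarrow> u differentiable (at x)"
  using iter_dd.simps(1) unfolding smooth_fun_def by metis

lemma continuous_on_eucl_grad:
  fixes u :: "real ^ 'n \<Rightarrow> real"
  assumes "smooth_fun u"
  shows "continuous_on UNIV (eucl_grad u)"
proof -
  have "continuous_on UNIV (iter_dd u [axis i 1])" for i
    using assms unfolding smooth_fun_def
    by (meson continuous_at_imp_continuous_on differentiable_imp_continuous_within)
  then show ?thesis
    unfolding eucl_grad_def by (simp add: continuous_on_vec_lambda)
qed

lemma test_fun_vanishes_outside_ball: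
  fixes u :: "real ^ 'n \<Rightarrow> real"
  assumes "test_fun u"
  obtains R where "R > 0" "\<And>y. R \<le> norm y \<Longrightarrow> u y = 0 \<and> eucl_grad u y = 0"
proof -
  have "bounded (closure {x. u x \<noteq> 0})"
    using assms by (simp add: test_fun_def compact_imp_bounded)
  then obtain B where B: "\<And>y. y \<in> closure {x. u x \<noteq> 0} \<Longrightarrow> norm y \<le> B"
    unfolding bounded_iff by blast
  define R where "R = \<bar>B\<bar> + 1"
  have "u y = 0 \<and> eucl_grad u y = 0" if y: "R \<le> norm y" for y
  proof -
    define U where "U = {z::real ^ 'n. \<bar>B\<bar> < norm z}"
    have "open U" unfolding U_def by (intro open_Collect_less continuous_intros)
    have "y \<in> U" using y unfolding U_def R_def by simp
    have zero: "u z = 0" if "z \<in> U" for z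
      using B[of z] closure_subset[of "{x. u x \<noteq> 0}"] that unfolding U_def by force
    have "(u has_derivative (\<lambda>h. 0)) (at y)"
      by (rule has_derivative_transform_within_open[OF has_derivative_const \<open>open U\<close> \<open>y \<in> U\<close>])
         (use zero in auto)
    then have "frechet_derivative u (at y) = (\<lambda>h. 0)"
      using frechet_derivative_at by metis
    then show ?thesis
      using zero[OF \<open>y \<in> U\<close>] by (simp add: eucl_grad_def vec_eq_iff)
  qed
  moreover have "R > 0" unfolding R_def by simp
  ultimately show ?thesis using that by blast
qed

lemma continuous_vanishing_outside_ball_bounded:
  fixes f :: "'a::{heine_borel,real_normed_vector} \<Rightarrow> 'b::real_normed_vector"
  assumes "continuous_on UNIV f" "\<And>y. R \<le> norm y \<Longrightarrow> f y = 0"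
  obtains M where "\<And>y. norm (f y) \<le> M"
proof -
  have "compact (f ` cball 0 R)"
    by (intro compact_continuous_image continuous_on_subset[OF assms(1)]) auto
  then obtain M where M: "\<And>z. z \<in> f ` cball 0 R \<Longrightarrow> norm z \<le> M"
    using compact_imp_bounded bounded_iff by metis
  have "norm (f y) \<le> max M 0" for y
    using M[of "f y"] assms(2)[of y] by (cases "norm y \<le> R") auto
  then show ?thesis using that by blast
qed

lemma continuous_on_interval_abs_bounded:
  fixes g :: "real \<Rightarrow> real"
  assumes "continuous_on {a..b} g"
  obtains C where "\<And>s. s \<in> {a..b} \<Longrightarrow> \<bar>g s\<bar> \<le> C"
  using compact_imp_bounded[OF compact_continuous_image[OF assms compact_Icc]]
  unfolding bounded_iff by (metis image_eqI real_norm_def)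

lemma upper_linear_bound_from_zero:
  fixes f :: "real \<Rightarrow> real"
  assumes deriv: "\<And>x. (f has_real_derivative deriv f x) (at x)" and f0: "f 0 = 0"
    and C: "\<And>s. s \<in> {0..R} \<Longrightarrow> \<bar>deriv f s\<bar> \<le> C" and s: "0 < s" "s \<le> R"
  shows "f s \<le> C * s"
proof -
  obtain z where "0 < z" "z < s" "f s - f 0 = (s - 0) * deriv f z"
    using MVT2[OF s(1), of f "deriv f"] deriv by auto
  with C[of z] f0 s show ?thesis by (simp add: mult.commute mult_left_mono)
qed

text \<open>Near 0 by the mean value theorem and continuity of f', away from 0 by compactness.\<close>

lemma lower_linear_bound_from_zero:
  fixes f :: "real \<Rightarrow> real"
  assumes deriv: "\<And>x. (f has_real_derivative deriv f x) (at x)"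
    and cont: "continuous_on UNIV (deriv f)"
    and f0: "f 0 = 0" and df0: "deriv f 0 > 0"
    and pos: "\<And>s. 0 < s \<Longrightarrow> s \<le> R \<Longrightarrow> f s > 0" and R: "R > 0"
  obtains c where "c > 0" "\<And>s. 0 < s \<Longrightarrow> s \<le> R \<Longrightarrow> c * s \<le> f s"
proof -
  define e where "e = deriv f 0 / 2"
  have "e > 0" using df0 unfolding e_def by simp
  obtain d where d: "d > 0" "\<And>s. \<bar>s\<bar> < d \<Longrightarrow> \<bar>deriv f s - deriv f 0\<bar> < e"
    using cont \<open>e > 0\<close> unfolding continuous_on_iff dist_real_def by (metis UNIV_I diff_zero)
  have near: "e * s \<le> f s" if s: "0 < s" "s < d" for s
  proof -
    obtain z where "0 < z" "z < s" "f s - f 0 = (s - 0) * deriv f z"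
      using MVT2[OF s(1), of f "deriv f"] deriv by auto
    moreover have "e \<le> deriv f z" using d(2)[of z] \<open>0 < z\<close> \<open>z < s\<close> s unfolding e_def by linarith
    ultimately show ?thesis using s f0 by (simp add: mult.commute mult_left_mono)
  qed
  obtain c' where c': "c' > 0" "\<And>s. d / 2 \<le> s \<Longrightarrow> s \<le> R \<Longrightarrow> c' * s \<le> f s"
  proof (cases "d / 2 \<le> R")
    case True
    have "continuous_on {d/2..R} f"
      using DERIV_continuous_on[OF deriv] by (rule continuous_on_subset) simp
    then obtain x0 where x0: "x0 \<in> {d/2..R}" "\<And>y. y \<in> {d/2..R} \<Longrightarrow> f x0 \<le> f y"
      using continuous_attains_inf[of "{d/2..R}" f] True by auto
    have "f x0 > 0" using pos x0(1) d(1) by auto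
    show ?thesis
    proof (rule that[of "f x0 / R"])
      fix s assume s: "d / 2 \<le> s" "s \<le> R"
      have "f x0 / R * s \<le> f x0" using \<open>f x0 > 0\<close> R s by (simp add: field_simps mult_left_mono)
      also have "\<dots> \<le> f s" using x0(2)[of s] s by auto
      finally show "f x0 / R * s \<le> f s" .
    qed (use \<open>f x0 > 0\<close> R in simp)
  next
    case False
    show ?thesis by (rule that[of 1]) (use False in auto)
  qed
  show ?thesis
  proof (rule that[of "min e c'"])
    fix s assume s: "0 < s" "s \<le> R"
    show "min e c' * s \<le> f s"
    proof (cases "s < d")
      case True
      then show ?thesis using near[OF s(1)] s by (smt (verit) mult_right_mono)
    next
      case False
      then show ?thesis using c'(2)[of s] s d(1) by (smt (verit) field_sum_of_halves mult_right_mono)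
    qed
  qed (use \<open>e > 0\<close> c' in simp)
qed

section \<open>Dilations and integrability near the origin\<close>

lemma lborel_eq_density_scaleR:
  "c > 0 \<Longrightarrow> (lborel::'a::euclidean_space measure) =
     density (distr lborel borel (\<lambda>x. c *\<^sub>R x)) (\<lambda>_. ennreal (c ^ DIM('a)))"
  using lborel_affine[where t="0::'a" and c=c] by simp

lemma nn_integral_lborel_scaleR:
  fixes f :: "'a::euclidean_space \<Rightarrow> ennreal"
  assumes [measurable]: "f \<in> borel_measurable borel" and c: "c > 0"
  shows "(\<integral>\<^sup>+x. f x \<partial>lborel) = ennreal (c ^ DIM('a)) * (\<integral>\<^sup>+x. f (c *\<^sub>R x) \<partial>lborel)"
  by (subst lborel_eq_density_scaleR[OF c])
     (simp add: nn_integral_density nn_integral_distr nn_integral_cmult)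

lemma lborel_integrable_scaleR_iff:
  fixes f :: "'a::euclidean_space \<Rightarrow> real"
  assumes [measurable]: "f \<in> borel_measurable borel" and c: "c > 0"
  shows "integrable lborel (\<lambda>x. f (c *\<^sub>R x)) \<longleftrightarrow> integrable lborel f"
proof -
  have "integrable lborel f \<longleftrightarrow>
      integrable (distr lborel borel (\<lambda>x. c *\<^sub>R x)) (\<lambda>x. c ^ DIM('a) *\<^sub>R f x)"
    using c by (subst lborel_eq_density_scaleR[OF c]) (intro integrable_density; simp)
  also have "\<dots> \<longleftrightarrow> integrable lborel (\<lambda>x. c ^ DIM('a) *\<^sub>R f (c *\<^sub>R x))"
    by (rule integrable_distr_eq) auto
  finally show ?thesis using c by simp
qed

lemma lborel_integral_scaleR:
  fixes f :: "'a::euclidean_space \<Rightarrow> real"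
  assumes [measurable]: "f \<in> borel_measurable borel" and c: "c > 0"
  shows "(\<integral>x. f x \<partial>lborel) = c ^ DIM('a) * (\<integral>x. f (c *\<^sub>R x) \<partial>lborel)"
proof -
  have "(\<integral>x. f x \<partial>lborel) = integral\<^sup>L (distr lborel borel (\<lambda>x. c *\<^sub>R x)) (\<lambda>x. c ^ DIM('a) *\<^sub>R f x)"
    using c by (subst lborel_eq_density_scaleR[OF c]) (intro integral_density; simp)
  also have "\<dots> = (\<integral>x. c ^ DIM('a) *\<^sub>R f (c *\<^sub>R x) \<partial>lborel)"
    by (rule integral_distr) auto
  finally show ?thesis by simp
qed

lemma dyadic_interval:
  fixes R r :: real
  assumes "0 < r" "r < R"
  obtains k :: nat where "R / 2 ^ (k + 1) \<le> r" "r < R / 2 ^ k"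
proof -
  obtain n :: nat where "(1/2) ^ n < r / R"
    using real_arch_pow_inv[of "r / R" "1/2"] assms by auto
  then have ex: "\<exists>n::nat. R / 2 ^ n \<le> r"
    using assms by (intro exI[of _ n]) (auto simp: field_simps power_divide)
  define n0 where "n0 = (LEAST n::nat. R / 2 ^ n \<le> r)"
  have n0: "R / 2 ^ n0 \<le> r" unfolding n0_def by (rule LeastI_ex[OF ex])
  then obtain k where k: "n0 = Suc k" using assms by (cases n0) auto
  have "\<not> R / 2 ^ k \<le> r"
    using not_less_Least[of k "\<lambda>n. R / 2 ^ n \<le> r"] k unfolding n0_def by auto
  then show ?thesis using that[of k] n0 k by auto
qed

lemma inverse_square_le_dyadic_sum:
  fixes y :: "'a::real_normed_vector"
  assumes R: "R > 0"
  shows "ennreal (norm (indicator (ball 0 R) y / norm y ^ 2))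
    \<le> (\<Sum>k. ennreal (4 ^ (k+1) / R^2) * indicator (ball (0::'a) (R / 2^k)) y)"
proof (cases "y \<in> ball 0 R \<and> y \<noteq> 0")
  case True
  then obtain k where k1: "R / 2 ^ (k+1) \<le> norm y" and k2: "norm y < R / 2 ^ k"
    using dyadic_interval[of "norm y" R] by auto
  have "0 < R / 2 ^ (k+1)" using R by simp
  then have "1 / norm y ^ 2 \<le> 1 / (R / 2 ^ (k+1))^2"
    using k1 True by (intro divide_left_mono mult_pos_pos zero_less_power power_mono) auto
  also have "\<dots> = 4 ^ (k+1) / R^2"
    using power_mult[of "2::real" 2 k]
    by (simp add: power_divide power_mult_distrib power_mult[symmetric] mult.commute)
  finally have "ennreal (norm (indicator (ball 0 R) y / norm y ^ 2))
      \<le> ennreal (4 ^ (k+1) / R^2) * indicator (ball (0::'a) (R / 2^k)) y"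
    using True k2 by (simp add: ennreal_leI)
  also have "\<dots> \<le> (\<Sum>k. ennreal (4 ^ (k+1) / R^2) * indicator (ball (0::'a) (R / 2^k)) y)"
  proof -
    define w where "w k = ennreal (4 ^ (k+1) / R^2) * indicator (ball (0::'a) (R / 2^k)) y" for k
    have "w k \<le> suminf w" using sum_le_suminf[of w "{k}"] by (simp add: summableI)
    then show ?thesis unfolding w_def .
  qed
  finally show ?thesis .
qed (auto simp: indicator_def)

text \<open>The dyadic balls have weighted volumes forming a geometric series with ratio 4/2^DIM,
  which converges exactly when DIM \<ge> 3.\<close>

lemma integrable_inverse_square_on_ball:
  assumes R: "R > 0" and D: "DIM('a::euclidean_space) \<ge> 3"
  shows "integrable lborel (\<lambda>y::'a. indicator (ball 0 R) y / norm y ^ 2)"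
proof -
  define V where "V = measure lborel (ball (0::'a) 1)"
  define w where "w k y = ennreal (4 ^ (k+1) / R^2) * indicator (ball (0::'a) (R / 2^k)) y" for k y
  define a where "a k = 4 ^ (k+1) / R^2 * ((R / 2^k) ^ DIM('a) * V)" for k
  have "V \<ge> 0" unfolding V_def by simp
  have a_geometric: "a k = 4 * R ^ DIM('a) / R^2 * V * (4 / 2 ^ DIM('a)) ^ k" for k
    unfolding a_def
    by (simp add: field_simps power_divide power_mult_distrib power_mult[symmetric] mult.commute)
  have "(2::real) ^ 3 \<le> 2 ^ DIM('a)" using D by (intro power_increasing) auto
  then have "4 / 2 ^ DIM('a) \<le> (1/2::real)" by (simp add: field_simps)
  then have "summable a"
    unfolding a_geometric by (intro summable_mult summable_geometric) auto
  have "(\<integral>\<^sup>+y. ennreal (norm (indicator (ball (0::'a) R) y / norm y ^ 2)) \<partial>lborel)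
      \<le> (\<integral>\<^sup>+y. (\<Sum>k. w k y) \<partial>lborel)"
    unfolding w_def by (intro nn_integral_mono inverse_square_le_dyadic_sum R)
  also have "\<dots> = (\<Sum>k. \<integral>\<^sup>+y. w k y \<partial>lborel)"
    unfolding w_def by (intro nn_integral_suminf borel_measurable_times_ennreal borel_measurable_indicator) auto
  also have "\<dots> = (\<Sum>k. ennreal (a k))"
  proof (intro suminf_cong)
    fix k
    have "measure lborel (ball (0::'a) (R / 2^k)) = (R / 2^k) ^ DIM('a) * V"
      unfolding V_def using R by (intro content_ball_conv_unit_ball) auto
    moreover have "emeasure lborel (ball (0::'a) (R / 2^k)) = measure lborel (ball (0::'a) (R / 2^k))"
      using emeasure_lborel_ball_finite[of "0::'a" "R/2^k"] by (simp add: emeasure_eq_ennreal_measure)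
    ultimately show "(\<integral>\<^sup>+y. w k y \<partial>lborel) = ennreal (a k)"
      unfolding w_def a_def using R \<open>V \<ge> 0\<close>
      by (simp add: nn_integral_cmult_indicator ennreal_mult[symmetric])
  qed
  also have "\<dots> < \<infinity>"
  proof -
    have a_nonneg: "0 \<le> a k" for k using R \<open>V \<ge> 0\<close> by (simp add: a_def)
    show ?thesis using ennreal_suminf_neq_top[OF \<open>summable a\<close> a_nonneg] by (simp add: less_top)
  qed
  finally show ?thesis
    by (intro integrableI_bounded) (auto intro!: borel_measurable_divide borel_measurable_indicator)
qed

definition inverse_power_bounded :: "real \<Rightarrow> nat \<Rightarrow> ('a::real_normed_vector \<Rightarrow> real) \<Rightarrow> bool" where
  "inverse_power_bounded R k f \<longleftrightarrow>
     (\<exists>C. \<forall>y. 0 < norm y \<and> norm y < R \<longrightarrow> \<bar>f y\<bar> \<le> C / norm y ^ k)"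

lemma inverse_power_boundedI:
  "(\<And>y. 0 < norm y \<Longrightarrow> norm y < R \<Longrightarrow> \<bar>f y\<bar> \<le> C / norm y ^ k) \<Longrightarrow> inverse_power_bounded R k f"
  unfolding inverse_power_bounded_def by blast

lemma inverse_power_boundedE:
  assumes "inverse_power_bounded R k f"
  obtains C where "C \<ge> 0" "\<And>y. 0 < norm y \<Longrightarrow> norm y < R \<Longrightarrow> \<bar>f y\<bar> \<le> C / norm y ^ k"
proof -
  obtain C where C: "\<And>y. 0 < norm y \<Longrightarrow> norm y < R \<Longrightarrow> \<bar>f y\<bar> \<le> C / norm y ^ k"
    using assms unfolding inverse_power_bounded_def by blast
  have "\<bar>f y\<bar> \<le> \<bar>C\<bar> / norm y ^ k" if "0 < norm y" "norm y < R" for y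
    using C[OF that] that by (smt (verit) divide_right_mono zero_le_power)
  then show ?thesis using that[of "\<bar>C\<bar>"] by auto
qed

lemma inverse_power_bounded_cong:
  "(\<And>y. 0 < norm y \<Longrightarrow> norm y < R \<Longrightarrow> f y = g y) \<Longrightarrow>
    inverse_power_bounded R k g \<Longrightarrow> inverse_power_bounded R k f"
  unfolding inverse_power_bounded_def by metis

lemma inverse_power_bounded_0I:
  "(\<And>y. 0 < norm y \<Longrightarrow> norm y < R \<Longrightarrow> \<bar>f y\<bar> \<le> B) \<Longrightarrow> inverse_power_bounded R 0 f"
  by (rule inverse_power_boundedI[where C=B]) auto

lemma inverse_power_bounded_const: "inverse_power_bounded R 0 (\<lambda>y. a)"
  by (rule inverse_power_bounded_0I[where B="\<bar>a\<bar>"]) auto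

lemma inverse_power_bounded_inverse_norm: "inverse_power_bounded R 1 (\<lambda>y. 1 / norm y)"
  by (rule inverse_power_boundedI[where C=1]) auto

lemma inverse_power_bounded_add:
  assumes "inverse_power_bounded R k f" "inverse_power_bounded R k g"
  shows "inverse_power_bounded R k (\<lambda>y. f y + g y)"
proof -
  obtain C1 where C1: "\<And>y. 0 < norm y \<Longrightarrow> norm y < R \<Longrightarrow> \<bar>f y\<bar> \<le> C1 / norm y ^ k"
    using inverse_power_boundedE[OF assms(1)] by blast
  obtain C2 where C2: "\<And>y. 0 < norm y \<Longrightarrow> norm y < R \<Longrightarrow> \<bar>g y\<bar> \<le> C2 / norm y ^ k"
    using inverse_power_boundedE[OF assms(2)] by blast
  show ?thesis
    by (rule inverse_power_boundedI[where C="C1 + C2"])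
       (use C1 C2 in \<open>fastforce simp: add_divide_distrib intro: abs_triangle_ineq[THEN order_trans]\<close>)
qed

lemma inverse_power_bounded_mult:
  assumes "inverse_power_bounded R j f" "inverse_power_bounded R k g"
  shows "inverse_power_bounded R (j + k) (\<lambda>y. f y * g y)"
proof -
  obtain C1 where C1: "\<And>y. 0 < norm y \<Longrightarrow> norm y < R \<Longrightarrow> \<bar>f y\<bar> \<le> C1 / norm y ^ j"
    using inverse_power_boundedE[OF assms(1)] by blast
  obtain C2 where C2: "\<And>y. 0 < norm y \<Longrightarrow> norm y < R \<Longrightarrow> \<bar>g y\<bar> \<le> C2 / norm y ^ k"
    using inverse_power_boundedE[OF assms(2)] by blast
  show ?thesis
  proof (rule inverse_power_boundedI[where C="C1 * C2"])
    fix y :: 'a assume y: "0 < norm y" "norm y < R"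
    have "\<bar>f y * g y\<bar> \<le> (C1 / norm y ^ j) * (C2 / norm y ^ k)"
      unfolding abs_mult using C1[OF y] C2[OF y] by (intro mult_mono) auto
    then show "\<bar>f y * g y\<bar> \<le> (C1 * C2) / norm y ^ (j + k)" by (simp add: power_add)
  qed
qed

lemma inverse_power_bounded_mono:
  assumes "inverse_power_bounded R j f" "j \<le> k" "R > 0"
  shows "inverse_power_bounded R k f"
proof -
  obtain C where "C \<ge> 0" and C: "\<And>y. 0 < norm y \<Longrightarrow> norm y < R \<Longrightarrow> \<bar>f y\<bar> \<le> C / norm y ^ j"
    using inverse_power_boundedE[OF assms(1)] by blast
  show ?thesis
  proof (rule inverse_power_boundedI[where C="C * R ^ (k - j)"])
    fix y :: 'a assume y: "0 < norm y" "norm y < R"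
    have "C / norm y ^ j = C * norm y ^ (k - j) / norm y ^ k"
      using y assms(2) by (simp add: power_diff)
    also have "\<dots> \<le> C * R ^ (k - j) / norm y ^ k"
      using y \<open>C \<ge> 0\<close> by (intro divide_right_mono mult_left_mono power_mono) auto
    finally show "\<bar>f y\<bar> \<le> C * R ^ (k - j) / norm y ^ k" using C[OF y] by linarith
  qed
qed

lemmas inverse_power_bounded_mult_left = inverse_power_bounded_mult[where j=0, simplified]
lemmas inverse_power_bounded_mult_right = inverse_power_bounded_mult[where k=0, simplified]

lemma inverse_power_bounded_mult_1_1:
  "inverse_power_bounded R 1 f \<Longrightarrow> inverse_power_bounded R 1 g \<Longrightarrow>
    inverse_power_bounded R 2 (\<lambda>y. f y * g y)"
  using inverse_power_bounded_mult[of R 1 f 1 g] by (simp add: numeral_2_eq_2)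

lemma inverse_power_bounded_square:
  "inverse_power_bounded R 0 f \<Longrightarrow> inverse_power_bounded R 0 (\<lambda>y. (f y)\<^sup>2)"
  using inverse_power_bounded_mult_left[of R f 0 f] by (simp add: power2_eq_square)

lemma inverse_power_bounded_cmult:
  "inverse_power_bounded R k f \<Longrightarrow> inverse_power_bounded R k (\<lambda>y. a * f y)"
  using inverse_power_bounded_mult_left[OF inverse_power_bounded_const] .

lemma inverse_power_bounded_diff:
  assumes "inverse_power_bounded R k f" "inverse_power_bounded R k g"
  shows "inverse_power_bounded R k (\<lambda>y. f y - g y)"
  using inverse_power_bounded_add[OF assms(1) inverse_power_bounded_cmult[OF assms(2), of "-1"]]
  by simp

lemma integrable_if_inverse_power_bounded_2:
  fixes f :: "'a::euclidean_space \<Rightarrow> real"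
  assumes R: "R > 0" and D: "DIM('a) \<ge> 3" and bound: "inverse_power_bounded R 2 f"
    and zero: "\<And>y. R \<le> norm y \<Longrightarrow> f y = 0"
    and cont: "continuous_on (- {0}) f"
  shows "integrable lborel f"
proof -
  obtain C where "C \<ge> 0" and C: "\<And>y. 0 < norm y \<Longrightarrow> norm y < R \<Longrightarrow> \<bar>f y\<bar> \<le> C / norm y ^ 2"
    using inverse_power_boundedE[OF bound] by blast
  have meas: "f \<in> borel_measurable lborel"
    using borel_measurable_continuous_countable_exceptions[of "{0}" f] cont by simp
  have "AE y in lborel. norm (f y) \<le> norm (C * (indicator (ball 0 R) y / norm y ^ 2))"
    using AE_lborel_singleton[of 0]
  proof eventually_elim
    case (elim y)
    then show ?case
      using C[of y] zero[of y] \<open>C \<ge> 0\<close> by (cases "norm y < R") (auto simp: indicator_def)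
  qed
  then show ?thesis
    using integrable_inverse_square_on_ball[OF R D]
    by (intro Bochner_Integration.integrable_bound[OF _ meas]) (rule integrable_mult_right)
qed

section \<open>Radial divergences integrate to zero\<close>

lemma integrable_dilations_on_interval:
  fixes k :: "'a::euclidean_space \<Rightarrow> real"
  assumes k: "integrable lborel k"
  shows "integrable (lborel \<Otimes>\<^sub>M lborel)
    (\<lambda>(t, x). t ^ (DIM('a) - 1) * k (t *\<^sub>R x) * indicator {1..2} t)" (is "integrable _ (case_prod ?F)")
proof (rule integrableI_bounded)
  have [measurable]: "k \<in> borel_measurable borel"
    using k by (simp add: borel_measurable_integrable)
  show "case_prod ?F \<in> borel_measurable (lborel \<Otimes>\<^sub>M lborel)"
    by measurable
  define K where "K = (\<integral>\<^sup>+y. ennreal (norm (k y)) \<partial>lborel)"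
  have inner: "(\<integral>\<^sup>+x. ennreal (norm (?F t x)) \<partial>lborel) \<le> indicator {1..2::real} t * K" for t
  proof (cases "t \<in> {1..2}")
    case True
    have "(\<integral>\<^sup>+x. ennreal (norm (?F t x)) \<partial>lborel)
        = ennreal (t ^ (DIM('a) - 1)) * (\<integral>\<^sup>+x. ennreal (norm (k (t *\<^sub>R x))) \<partial>lborel)"
      using True by (simp add: abs_mult ennreal_mult nn_integral_cmult)
    also have "\<dots> \<le> ennreal (t ^ DIM('a)) * (\<integral>\<^sup>+x. ennreal (norm (k (t *\<^sub>R x))) \<partial>lborel)"
      using True by (intro mult_right_mono ennreal_leI power_increasing) auto
    also have "\<dots> = K"
      unfolding K_def using True by (intro nn_integral_lborel_scaleR[symmetric]) auto
    finally show ?thesis using True by simp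
  qed simp
  have "(\<integral>\<^sup>+z. ennreal (norm (case_prod ?F z)) \<partial>(lborel \<Otimes>\<^sub>M lborel))
      = (\<integral>\<^sup>+t. \<integral>\<^sup>+x. ennreal (norm (?F t x)) \<partial>lborel \<partial>lborel)"
    by (subst lborel.nn_integral_fst[symmetric]) auto
  also have "\<dots> \<le> (\<integral>\<^sup>+t. indicator {1..2::real} t * K \<partial>lborel)"
    by (intro nn_integral_mono inner)
  also have "\<dots> < \<infinity>"
    using k by (simp add: K_def nn_integral_multc integrable_iff_bounded ennreal_mult_less_top)
  finally show "(\<integral>\<^sup>+z. ennreal (norm (case_prod ?F z)) \<partial>(lborel \<Otimes>\<^sub>M lborel)) < \<infinity>" .
qed

text \<open>If along every ray t^DIM h(t x) is a primitive of t^(DIM-1) k(t x), then integrating over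
  t \<in> [1,2] and over x, the left side gives 2^DIM \<integral>h(2x) - \<integral>h = 0 by scaling, while Fubini and
  scaling turn the right side into ln 2 \<integral>k.\<close>

lemma lborel_integral_eq_0_if_radial_primitive:
  fixes h k :: "'a::euclidean_space \<Rightarrow> real"
  assumes h: "integrable lborel h" and k: "integrable lborel k"
    and k_cont: "continuous_on (- {0}) k"
    and primitive: "\<And>x t. x \<noteq> 0 \<Longrightarrow> 1 \<le> t \<Longrightarrow> t \<le> 2 \<Longrightarrow>
      ((\<lambda>t. t ^ DIM('a) * h (t *\<^sub>R x)) has_real_derivative t ^ (DIM('a) - 1) * k (t *\<^sub>R x)) (at t)"
  shows "(\<integral>x. k x \<partial>lborel) = 0"
proof -
  have [measurable]: "h \<in> borel_measurable borel" "k \<in> borel_measurable borel"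
    using h k by (simp_all add: borel_measurable_integrable)
  define F where "F t x = t ^ (DIM('a) - 1) * k (t *\<^sub>R x) * indicator {1..2} t" for t x
  have F_int: "integrable (lborel \<Otimes>\<^sub>M lborel) (case_prod F)"
    using integrable_dilations_on_interval[OF k] unfolding F_def .
  have ps: "pair_sigma_finite (lborel::real measure) (lborel::'a measure)"
    by (simp add: pair_sigma_finite_def sigma_finite_lborel)
  have "(\<integral>x. (\<integral>t. F t x \<partial>lborel) \<partial>lborel) = (\<integral>x. 2 ^ DIM('a) * h (2 *\<^sub>R x) - h x \<partial>lborel)"
  proof (rule integral_cong_AE)
    show "AE x in lborel. (\<integral>t. F t x \<partial>lborel) = 2 ^ DIM('a) * h (2 *\<^sub>R x) - h x"
      using AE_lborel_singleton[of 0]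
    proof eventually_elim
      case (elim x)
      have "isCont (\<lambda>t. t ^ (DIM('a) - 1) * k (t *\<^sub>R x)) t" if "1 \<le> t" for t
      proof -
        have "isCont k (t *\<^sub>R x)"
          using k_cont elim that by (simp add: continuous_on_eq_continuous_at open_Compl)
        then show ?thesis
          by (intro continuous_intros isCont_o2[where f="\<lambda>t. t *\<^sub>R x", OF _ \<open>isCont k _\<close>])
      qed
      then have "(\<integral>t. F t x \<partial>lborel) = 2 ^ DIM('a) * h (2 *\<^sub>R x) - 1 ^ DIM('a) * h (1 *\<^sub>R x)"
        unfolding F_def by (intro integral_FTC_Icc_real primitive[OF elim]) auto
      then show ?case by simp
    qed
  qed (use pair_sigma_finite.integrable_snd[OF ps F_int] in \<open>auto simp: borel_measurable_integrable\<close>)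
  also have "\<dots> = 0"
    using h lborel_integrable_scaleR_iff[of h 2] lborel_integral_scaleR[of h 2] by simp
  finally have x_first: "(\<integral>x. (\<integral>t. F t x \<partial>lborel) \<partial>lborel) = 0" .
  have t_slice: "(\<integral>x. F t x \<partial>lborel) = (1 / t * indicator {1..2} t) * (\<integral>x. k x \<partial>lborel)" for t
  proof (cases "t \<in> {1..2}")
    case True
    have "t ^ DIM('a) = t * t ^ (DIM('a) - 1)"
      using power_Suc[of t "DIM('a) - 1"] by simp
    moreover have "(\<integral>x. F t x \<partial>lborel) = t ^ (DIM('a) - 1) * (\<integral>x. k (t *\<^sub>R x) \<partial>lborel)"
      using True by (simp add: F_def)
    ultimately show ?thesis
      using True lborel_integral_scaleR[of k t] by (simp add: field_simps)
  qed (simp add: F_def)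
  have "(\<integral>t. (\<integral>x. F t x \<partial>lborel) \<partial>lborel)
      = (\<integral>t. 1 / t * indicator {1..2} t \<partial>lborel) * (\<integral>x. k x \<partial>lborel)"
    by (simp only: t_slice integral_mult_left_zero)
  also have "(\<integral>t. 1 / t * indicator {1..2} t \<partial>lborel) = ln 2 - ln (1::real)"
    by (intro integral_FTC_Icc_real) (auto intro!: derivative_eq_intros continuous_intros)
  finally show ?thesis
    using pair_sigma_finite.Fubini_integral[OF ps F_int] x_first by simp
qed

section \<open>The Hardy identity on the model manifold\<close>

text \<open>The pointwise identity behind the theorem, with a = u, b = u_r, g = |grad u|, s = r,
  p, dp, ddp = psi, psi', psi'' at r, and rho the volume density; L and L' are hardy_coeff and
  hardy_coeff_deriv below.\<close>

lemma hardy_square_identity: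
  fixes a b g s p dp ddp \<rho> n :: real
  assumes "s \<noteq> 0" "p \<noteq> 0"
  defines "L \<equiv> 1 / (2 * s) - (n - 1) * dp / (2 * p)"
    and "L' \<equiv> - 1 / (2 * s\<^sup>2) - (n - 1) * (ddp / p - (dp / p)\<^sup>2) / 2"
  shows "(b\<^sup>2 + (s / p)\<^sup>2 * (g\<^sup>2 - b\<^sup>2)) * \<rho>
     + (n - 1) / 4 * (((2 * (- ddp / p) + (n - 3) * (- (dp\<^sup>2 - 1) / p\<^sup>2)) * a\<^sup>2) * \<rho>)
     - (1 / 4 * ((a\<^sup>2 / s\<^sup>2) * \<rho>) + (n - 1) * (n - 3) / 4 * ((a\<^sup>2 / p\<^sup>2) * \<rho>))
     - \<rho> * (((n - 1) * (dp / p) * a\<^sup>2 + 2 * a * b) * L + a\<^sup>2 * L')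
   = \<rho> * ((s / p)\<^sup>2 * (g\<^sup>2 - b\<^sup>2)) + \<rho> * (b - a * L)\<^sup>2"
  unfolding L_def L'_def using assms by (simp add: field_simps power2_eq_square)

locale hardy_model =
  fixes \<psi> :: "real \<Rightarrow> real" and u :: "real ^ 'n \<Rightarrow> real"
  assumes N3: "CARD('n) \<ge> 3"
    and psi_smooth: "smooth_fun \<psi>"
    and psi_pos: "\<And>r. r > 0 \<Longrightarrow> \<psi> r > 0"
    and u_test: "test_fun u"
begin

text \<open>The coefficient L(r) of the radial vector field X = L(r) d/dr whose divergence, applied to
  u^2 X, produces both Hardy weights; hardy_coeff_deriv is L'.\<close>

definition hardy_coeff :: "real \<Rightarrow> real" where
  "hardy_coeff s = 1 / (2 * s) - (real CARD('n) - 1) * deriv \<psi> s / (2 * \<psi> s)"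

definition hardy_coeff_deriv :: "real \<Rightarrow> real" where
  "hardy_coeff_deriv s =
     - 1 / (2 * s\<^sup>2) - (real CARD('n) - 1) * (deriv (deriv \<psi>) s / \<psi> s - (deriv \<psi> s / \<psi> s)\<^sup>2) / 2"

definition flux :: "real ^ 'n \<Rightarrow> real" where
  "flux y = model_density \<psi> y * (u y)\<^sup>2 * hardy_coeff (norm y) / norm y"

text \<open>flux_div is the Riemannian divergence of u^2 X times the volume density; along each ray,
  t^N flux(t x) is a primitive of t^(N-1) flux_div(t x).\<close>

definition flux_div :: "real ^ 'n \<Rightarrow> real" where
  "flux_div y = model_density \<psi> y *
     (((real CARD('n) - 1) * (deriv \<psi> (norm y) / \<psi> (norm y)) * (u y)\<^sup>2 + 2 * u y * radial_deriv u y)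
        * hardy_coeff (norm y)
      + (u y)\<^sup>2 * hardy_coeff_deriv (norm y))"

lemma u_smooth: "smooth_fun u"
  using u_test by (simp add: test_fun_def)

lemma u_differentiable: "u differentiable (at y)"
  using smooth_fun_differentiable[OF u_smooth] .

lemma psi_deriv: "(\<psi> has_real_derivative deriv \<psi> s) (at s)"
  and dpsi_deriv: "(deriv \<psi> has_real_derivative deriv (deriv \<psi>) s) (at s)"
  using smooth_fun_real_derivatives[OF psi_smooth] by blast+

lemma continuous_on_psi: "continuous_on UNIV \<psi>"
  and continuous_on_dpsi: "continuous_on UNIV (deriv \<psi>)"
  and continuous_on_ddpsi: "continuous_on UNIV (deriv (deriv \<psi>))"
  using psi_deriv dpsi_deriv smooth_fun_real_derivatives(3)[OF psi_smooth]
  by (meson DERIV_isCont continuous_at_imp_continuous_on)+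

lemma continuous_on_compose_psi [continuous_intros]:
  "continuous_on S f \<Longrightarrow> continuous_on S (\<lambda>x. \<psi> (f x))"
  "continuous_on S f \<Longrightarrow> continuous_on S (\<lambda>x. deriv \<psi> (f x))"
  "continuous_on S f \<Longrightarrow> continuous_on S (\<lambda>x. deriv (deriv \<psi>) (f x))"
  using continuous_on_compose2[OF continuous_on_psi] continuous_on_compose2[OF continuous_on_dpsi]
    continuous_on_compose2[OF continuous_on_ddpsi] by blast+

lemma continuous_on_compose_u [continuous_intros]:
  "continuous_on S f \<Longrightarrow> continuous_on S (\<lambda>x. u (f x))"
  "continuous_on S f \<Longrightarrow> continuous_on S (\<lambda>x. eucl_grad u (f x))"
proof -
  have "continuous_on UNIV u"
    using u_differentiable by (simp add: continuous_at_imp_continuous_on differentiable_imp_continuous_within)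
  then show "continuous_on S f \<Longrightarrow> continuous_on S (\<lambda>x. u (f x))"
    using continuous_on_compose2 by blast
  show "continuous_on S f \<Longrightarrow> continuous_on S (\<lambda>x. eucl_grad u (f x))"
    using continuous_on_compose2[OF continuous_on_eucl_grad[OF u_smooth]] by blast
qed

lemma continuous_on_radial_deriv [continuous_intros]:
  "continuous_on S f \<Longrightarrow> (\<And>x. x \<in> S \<Longrightarrow> f x \<noteq> 0) \<Longrightarrow> continuous_on S (\<lambda>x. radial_deriv u (f x))"
  unfolding radial_deriv_eq_inner[OF u_differentiable] by (intro continuous_intros) auto

lemma psi_norm_nonzero: "y \<noteq> 0 \<Longrightarrow> \<psi> (norm y) \<noteq> 0"
  using psi_pos[of "norm y"] by simp

lemma continuous_on_model_density [continuous_intros]: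
  "continuous_on S f \<Longrightarrow> (\<And>x. x \<in> S \<Longrightarrow> f x \<noteq> 0) \<Longrightarrow> continuous_on S (\<lambda>x. model_density \<psi> (f x))"
  unfolding model_density_def by (intro continuous_intros) auto

lemma continuous_on_flux: "continuous_on (- {0}) flux"
  and continuous_on_flux_div: "continuous_on (- {0}) flux_div"
  unfolding flux_def[abs_def] flux_div_def[abs_def] hardy_coeff_def hardy_coeff_deriv_def
  by (intro continuous_intros; auto simp: psi_norm_nonzero)+

lemma has_real_derivative_hardy_coeff:
  assumes "s > 0"
  shows "(hardy_coeff has_real_derivative hardy_coeff_deriv s) (at s)"
  unfolding hardy_coeff_def[abs_def]
  using assms psi_pos[OF assms]
  by (auto intro!: derivative_eq_intros psi_deriv dpsi_deriv
      simp: hardy_coeff_deriv_def field_simps power2_eq_square)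

lemma card_eq_Suc_Suc: "CARD('n) = Suc (Suc (CARD('n) - 2))"
  using N3 by simp

lemma has_real_derivative_u_ray:
  assumes "t > 0" "x \<noteq> 0"
  shows "((\<lambda>t. u (t *\<^sub>R x)) has_real_derivative norm x * radial_deriv u (t *\<^sub>R x)) (at t)"
proof -
  have "((\<lambda>t. u (t *\<^sub>R x)) has_derivative (\<lambda>h. frechet_derivative u (at (t *\<^sub>R x)) (h *\<^sub>R x))) (at t)"
    using has_derivative_compose[OF _ frechet_derivative_works[THEN iffD1, OF u_differentiable]]
      has_derivative_scaleR_left[OF has_derivative_ident] by fastforce
  moreover have "frechet_derivative u (at (t *\<^sub>R x)) (h *\<^sub>R x) = (norm x * radial_deriv u (t *\<^sub>R x)) * h" for h
    using assms by (simp add: frechet_derivative_eq_inner_eucl_grad[OF u_differentiable]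
        radial_deriv_eq_inner[OF u_differentiable] field_simps)
  ultimately show ?thesis
    by (simp add: has_field_derivative_def)
qed

lemma has_real_derivative_psi_power_hardy_coeff:
  assumes "s > 0"
  shows "((\<lambda>s. \<psi> s ^ (CARD('n) - 1) * hardy_coeff s) has_real_derivative
    \<psi> s ^ (CARD('n) - 1) * ((real CARD('n) - 1) * (deriv \<psi> s / \<psi> s) * hardy_coeff s + hardy_coeff_deriv s)) (at s)"
proof -
  obtain k where k: "CARD('n) = Suc (Suc k)" using card_eq_Suc_Suc by blast
  show ?thesis
    unfolding k diff_Suc_1
    by (rule DERIV_cong[OF DERIV_mult[OF DERIV_power_Suc[OF psi_deriv] has_real_derivative_hardy_coeff[OF assms]]])
       (use psi_pos[OF assms] in \<open>simp add: field_simps\<close>)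
qed

lemma flux_ray:
  assumes "t > 0" "x \<noteq> 0"
  shows "t ^ CARD('n) * flux (t *\<^sub>R x) =
    \<psi> (t * norm x) ^ (CARD('n) - 1) * hardy_coeff (t * norm x) * (u (t *\<^sub>R x))\<^sup>2 / norm x ^ CARD('n)"
proof -
  obtain k where k: "CARD('n) = Suc (Suc k)" using card_eq_Suc_Suc by blast
  show ?thesis
    using assms by (simp add: flux_def model_density_def k field_simps power_divide power_mult_distrib)
qed

lemma has_real_derivative_flux_ray:
  assumes "t > 0" "x \<noteq> 0"
  shows "((\<lambda>t. t ^ CARD('n) * flux (t *\<^sub>R x)) has_real_derivative
    t ^ (CARD('n) - 1) * flux_div (t *\<^sub>R x)) (at t)"
proof -
  define g where "g s = \<psi> s ^ (CARD('n) - 1) * hardy_coeff s" for s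
  define g' where "g' s =
    \<psi> s ^ (CARD('n) - 1) * ((real CARD('n) - 1) * (deriv \<psi> s / \<psi> s) * hardy_coeff s + hardy_coeff_deriv s)" for s
  have "t * norm x > 0" using assms by simp
  have "(g has_real_derivative g' (t * norm x)) (at (t * norm x))"
    unfolding g_def[abs_def] g'_def
    by (rule has_real_derivative_psi_power_hardy_coeff[OF \<open>t * norm x > 0\<close>])
  then have "((\<lambda>t. g (t * norm x)) has_real_derivative g' (t * norm x) * norm x) (at t)"
    by (rule DERIV_chain2) (auto intro!: derivative_eq_intros)
  then have "((\<lambda>t. g (t * norm x) * (u (t *\<^sub>R x))\<^sup>2 / norm x ^ CARD('n)) has_real_derivative
      (g' (t * norm x) * norm x * (u (t *\<^sub>R x))\<^sup>2
       + g (t * norm x) * (2 * u (t *\<^sub>R x) * (norm x * radial_deriv u (t *\<^sub>R x)))) / norm x ^ CARD('n)) (at t)"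
    using assms by (auto intro!: derivative_eq_intros has_real_derivative_u_ray[OF assms])
  moreover have "(g' (t * norm x) * norm x * (u (t *\<^sub>R x))\<^sup>2
       + g (t * norm x) * (2 * u (t *\<^sub>R x) * (norm x * radial_deriv u (t *\<^sub>R x)))) / norm x ^ CARD('n)
      = t ^ (CARD('n) - 1) * flux_div (t *\<^sub>R x)"
  proof -
    obtain k where k: "CARD('n) = Suc (Suc k)" using card_eq_Suc_Suc by blast
    show ?thesis
      using assms psi_pos[OF \<open>t * norm x > 0\<close>]
      by (simp add: g_def g'_def flux_div_def model_density_def k field_simps power_divide power_mult_distrib)
  qed
  ultimately have "((\<lambda>t. g (t * norm x) * (u (t *\<^sub>R x))\<^sup>2 / norm x ^ CARD('n)) has_real_derivative
      t ^ (CARD('n) - 1) * flux_div (t *\<^sub>R x)) (at t)"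
    by (rule DERIV_cong)
  then show ?thesis
    by (rule has_field_derivative_transform_within_open[where S="{0<..}"])
       (use assms flux_ray in \<open>auto simp: g_def\<close>)
qed

definition hardy_integrand :: "real ^ 'n \<Rightarrow> real" where
  "hardy_integrand x = model_grad_sq \<psi> u x * model_density \<psi> x
    + (real CARD('n) - 1) / 4 * (((2 * K_rad \<psi> (norm x) + (real CARD('n) - 3) * H_tan \<psi> (norm x))
        * (u x)\<^sup>2) * model_density \<psi> x)
    - (1 / 4 * (((u x)\<^sup>2 / (norm x)\<^sup>2) * model_density \<psi> x)
       + (real CARD('n) - 1) * (real CARD('n) - 3) / 4 * (((u x)\<^sup>2 / (\<psi> (norm x))\<^sup>2) * model_density \<psi> x))"

lemma flux_div_le_hardy_integrand:
  assumes "x \<noteq> 0"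
  shows "flux_div x \<le> hardy_integrand x"
proof -
  have "hardy_integrand x - flux_div x =
      model_density \<psi> x * ((norm x / \<psi> (norm x))\<^sup>2 * ((norm (eucl_grad u x))\<^sup>2 - (radial_deriv u x)\<^sup>2))
      + model_density \<psi> x * (radial_deriv u x - u x * hardy_coeff (norm x))\<^sup>2"
    unfolding hardy_integrand_def flux_div_def hardy_coeff_def hardy_coeff_deriv_def model_grad_sq_def
      K_rad_def H_tan_def
    by (rule hardy_square_identity[where a="u x" and b="radial_deriv u x" and g="norm (eucl_grad u x)"
        and s="norm x" and p="\<psi> (norm x)" and dp="deriv \<psi> (norm x)" and ddp="deriv (deriv \<psi>) (norm x)"
        and \<rho>="model_density \<psi> x" and n="real CARD('n)", OF _ psi_norm_nonzero[OF assms]])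
       (use assms in simp)
  moreover have "(radial_deriv u x)\<^sup>2 \<le> (norm (eucl_grad u x))\<^sup>2"
    using power_mono[OF abs_radial_deriv_le[where y=x, OF u_differentiable] abs_ge_zero, where n=2] by simp
  moreover have "model_density \<psi> x \<ge> 0"
    unfolding model_density_def using psi_pos[of "norm x"] assms by simp
  ultimately have "0 \<le> hardy_integrand x - flux_div x"
    by (simp only:) (intro add_nonneg_nonneg mult_nonneg_nonneg; simp)
  then show ?thesis by simp
qed

end

locale hardy_model_bounded = hardy_model \<psi> u for \<psi> :: "real \<Rightarrow> real" and u :: "real ^ 'n \<Rightarrow> real" +
  fixes R c C M :: real
  assumes R_pos: "R > 0"
    and support: "\<And>y. R \<le> norm y \<Longrightarrow> u y = 0 \<and> eucl_grad u y = 0"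
    and c_pos: "c > 0"
    and psi_bounds: "\<And>s. 0 < s \<Longrightarrow> s \<le> R \<Longrightarrow>
       c * s \<le> \<psi> s \<and> \<psi> s \<le> C * s \<and> \<bar>deriv \<psi> s\<bar> \<le> C \<and> \<bar>deriv (deriv \<psi>) s\<bar> \<le> C"
    and u_bound: "\<And>y. \<bar>u y\<bar> \<le> M \<and> norm (eucl_grad u y) \<le> M"
begin

lemma inverse_power_bounded_u: "inverse_power_bounded R 0 u"
  and inverse_power_bounded_grad: "inverse_power_bounded R 0 (\<lambda>y. norm (eucl_grad u y))"
  and inverse_power_bounded_radial_deriv: "inverse_power_bounded R 0 (radial_deriv u)"
  using u_bound abs_radial_deriv_le[OF u_differentiable]
  by (auto intro!: inverse_power_bounded_0I[where B=M] intro: order_trans)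

lemma inverse_power_bounded_dpsi: "inverse_power_bounded R 0 (\<lambda>y::real^'n. deriv \<psi> (norm y))"
  and inverse_power_bounded_ddpsi: "inverse_power_bounded R 0 (\<lambda>y::real^'n. deriv (deriv \<psi>) (norm y))"
  using psi_bounds by (auto intro!: inverse_power_bounded_0I[where B=C])

lemma inverse_power_bounded_inverse_psi: "inverse_power_bounded R 1 (\<lambda>y::real^'n. 1 / \<psi> (norm y))"
proof (rule inverse_power_boundedI[where C="1/c"])
  fix y :: "real^'n" assume y: "0 < norm y" "norm y < R"
  then have "c * norm y \<le> \<psi> (norm y)" "0 < c * norm y" using psi_bounds[of "norm y"] c_pos by auto
  then show "\<bar>1 / \<psi> (norm y)\<bar> \<le> 1 / c / norm y ^ 1"
    using frac_le[of 1 1 "c * norm y" "\<psi> (norm y)"] by simp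
qed

lemma inverse_power_bounded_norm_div_psi: "inverse_power_bounded R 0 (\<lambda>y::real^'n. norm y / \<psi> (norm y))"
proof (rule inverse_power_bounded_0I[where B="1/c"])
  fix y :: "real^'n" assume y: "0 < norm y" "norm y < R"
  then have "c * norm y \<le> \<psi> (norm y)" using psi_bounds[of "norm y"] by auto
  then show "\<bar>norm y / \<psi> (norm y)\<bar> \<le> 1 / c"
    using y c_pos psi_pos[of "norm y"] by (simp add: field_simps)
qed

lemma inverse_power_bounded_density: "inverse_power_bounded R 0 (model_density \<psi> :: real^'n \<Rightarrow> real)"
proof (rule inverse_power_bounded_0I[where B="C ^ (CARD('n) - 1)"])
  fix y :: "real^'n" assume y: "0 < norm y" "norm y < R"
  then have "0 \<le> \<psi> (norm y) / norm y" "\<psi> (norm y) / norm y \<le> C"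
    using psi_pos[of "norm y"] psi_bounds[of "norm y"] by (auto simp: divide_le_eq)
  then show "\<bar>model_density \<psi> y\<bar> \<le> C ^ (CARD('n) - 1)"
    unfolding model_density_def by (simp add: power_mono)
qed

lemma inverse_power_bounded_log_deriv_psi:
  "inverse_power_bounded R 1 (\<lambda>y::real^'n. deriv \<psi> (norm y) / \<psi> (norm y))"
  using inverse_power_bounded_mult_left[OF inverse_power_bounded_dpsi inverse_power_bounded_inverse_psi]
  by simp

lemma inverse_power_bounded_hardy_coeff: "inverse_power_bounded R 1 (\<lambda>y::real^'n. hardy_coeff (norm y))"
  unfolding hardy_coeff_def
  using inverse_power_bounded_diff[OF
      inverse_power_bounded_cmult[OF inverse_power_bounded_inverse_norm, where a="1/2"]
      inverse_power_bounded_cmult[OF inverse_power_bounded_log_deriv_psi, where a="(real CARD('n) - 1) / 2"]]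
  by simp

lemma inverse_power_bounded_hardy_coeff_deriv:
  "inverse_power_bounded R 2 (\<lambda>y::real^'n. hardy_coeff_deriv (norm y))"
proof -
  have "inverse_power_bounded R 2 (\<lambda>y::real^'n. deriv (deriv \<psi>) (norm y) / \<psi> (norm y))"
    using inverse_power_bounded_mono[OF inverse_power_bounded_mult_left[OF
          inverse_power_bounded_ddpsi inverse_power_bounded_inverse_psi] _ R_pos] by simp
  then have "inverse_power_bounded R 2 (\<lambda>y::real^'n.
      (-1/2) * ((1 / norm y) * (1 / norm y)) - ((real CARD('n) - 1) / 2) *
        (deriv (deriv \<psi>) (norm y) / \<psi> (norm y)
         - (deriv \<psi> (norm y) / \<psi> (norm y)) * (deriv \<psi> (norm y) / \<psi> (norm y))))"
    by (intro inverse_power_bounded_diff inverse_power_bounded_cmult inverse_power_bounded_mult_1_1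
        inverse_power_bounded_inverse_norm inverse_power_bounded_log_deriv_psi)
  then show ?thesis
    by (rule inverse_power_bounded_cong[rotated]) (simp add: hardy_coeff_deriv_def power2_eq_square)
qed

lemma inverse_power_bounded_curvature:
  "inverse_power_bounded R 2 (\<lambda>y::real^'n. 2 * K_rad \<psi> (norm y) + (real CARD('n) - 3) * H_tan \<psi> (norm y))"
proof -
  have "inverse_power_bounded R 1 (\<lambda>y::real^'n. (-1) * (deriv (deriv \<psi>) (norm y) * (1 / \<psi> (norm y))))"
    by (intro inverse_power_bounded_cmult inverse_power_bounded_mult_left
        inverse_power_bounded_ddpsi inverse_power_bounded_inverse_psi)
  then have "inverse_power_bounded R 1 (\<lambda>y::real^'n. K_rad \<psi> (norm y))"
    by (rule inverse_power_bounded_cong[rotated]) (simp add: K_rad_def)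
  then have K: "inverse_power_bounded R 2 (\<lambda>y::real^'n. K_rad \<psi> (norm y))"
    by (rule inverse_power_bounded_mono[OF _ _ R_pos]) simp
  have "inverse_power_bounded R 0 (\<lambda>y::real^'n. 1 - (deriv \<psi> (norm y))\<^sup>2)"
    by (intro inverse_power_bounded_diff inverse_power_bounded_const inverse_power_bounded_square
        inverse_power_bounded_dpsi)
  from inverse_power_bounded_mult_left[OF this inverse_power_bounded_mult_1_1[OF
      inverse_power_bounded_inverse_psi inverse_power_bounded_inverse_psi]]
  have H: "inverse_power_bounded R 2 (\<lambda>y::real^'n. H_tan \<psi> (norm y))"
    by (rule inverse_power_bounded_cong[rotated]) (simp add: H_tan_def power2_eq_square)
  show ?thesis
    by (intro inverse_power_bounded_add inverse_power_bounded_cmult K H)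
qed

lemma integrable_if_bounded_near_pole:
  fixes f :: "real ^ 'n \<Rightarrow> real"
  assumes "continuous_on (- {0}) f" "\<And>y. R \<le> norm y \<Longrightarrow> f y = 0" "inverse_power_bounded R 2 f"
  shows "integrable lborel f"
  using integrable_if_inverse_power_bounded_2[OF R_pos _ assms(3,2,1)] N3 by simp

lemma integrable_energy: "integrable lborel (\<lambda>x. model_grad_sq \<psi> u x * model_density \<psi> x)"
proof (rule integrable_if_bounded_near_pole)
  have "inverse_power_bounded R 0 (model_grad_sq \<psi> u)"
    unfolding model_grad_sq_def
    by (intro inverse_power_bounded_add inverse_power_bounded_mult_left inverse_power_bounded_diff
        inverse_power_bounded_square inverse_power_bounded_radial_deriv inverse_power_bounded_grad
        inverse_power_bounded_norm_div_psi)
  from inverse_power_bounded_mult_left[OF this inverse_power_bounded_density]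
  show "inverse_power_bounded R 2 (\<lambda>x. model_grad_sq \<psi> u x * model_density \<psi> x)"
    by (rule inverse_power_bounded_mono) (use R_pos in auto)
qed (use support in \<open>auto simp: model_grad_sq_def radial_deriv_eq_inner[OF u_differentiable]
  intro!: continuous_intros simp: psi_norm_nonzero\<close>)

lemma integrable_curvature_term:
  "integrable lborel (\<lambda>x. ((2 * K_rad \<psi> (norm x) + (real CARD('n) - 3) * H_tan \<psi> (norm x)) * (u x)\<^sup>2)
     * model_density \<psi> x)"
  by (rule integrable_if_bounded_near_pole)
     (use support inverse_power_bounded_mult_right[OF inverse_power_bounded_mult_right[OF
        inverse_power_bounded_curvature inverse_power_bounded_square[OF inverse_power_bounded_u]]
        inverse_power_bounded_density]
      in \<open>auto simp: K_rad_def H_tan_def intro!: continuous_intros simp: psi_norm_nonzero\<close>)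

lemma integrable_hardy_term: "integrable lborel (\<lambda>x. ((u x)\<^sup>2 / (norm x)\<^sup>2) * model_density \<psi> x)"
proof (rule integrable_if_bounded_near_pole)
  show "inverse_power_bounded R 2 (\<lambda>x. ((u x)\<^sup>2 / (norm x)\<^sup>2) * model_density \<psi> x)"
    using inverse_power_bounded_mult_right[OF inverse_power_bounded_mult_1_1[OF
        inverse_power_bounded_inverse_norm inverse_power_bounded_inverse_norm]
        inverse_power_bounded_mult_left[OF inverse_power_bounded_square[OF inverse_power_bounded_u]
          inverse_power_bounded_density]]
    by (rule inverse_power_bounded_cong[rotated]) (simp add: power2_eq_square)
qed (use support in \<open>auto intro!: continuous_intros\<close>)

lemma integrable_tangential_term:
  "integrable lborel (\<lambda>x. ((u x)\<^sup>2 / (\<psi> (norm x))\<^sup>2) * model_density \<psi> x)"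
proof (rule integrable_if_bounded_near_pole)
  show "inverse_power_bounded R 2 (\<lambda>x. ((u x)\<^sup>2 / (\<psi> (norm x))\<^sup>2) * model_density \<psi> x)"
    using inverse_power_bounded_mult_right[OF inverse_power_bounded_mult_1_1[OF
        inverse_power_bounded_inverse_psi inverse_power_bounded_inverse_psi]
        inverse_power_bounded_mult_left[OF inverse_power_bounded_square[OF inverse_power_bounded_u]
          inverse_power_bounded_density]]
    by (rule inverse_power_bounded_cong[rotated]) (simp add: power2_eq_square)
qed (use support in \<open>auto intro!: continuous_intros simp: psi_norm_nonzero\<close>)

lemma integrable_flux: "integrable lborel flux"
proof (rule integrable_if_bounded_near_pole[OF continuous_on_flux])
  show "inverse_power_bounded R 2 flux"
    using inverse_power_bounded_mult_left[OF
        inverse_power_bounded_mult_left[OF inverse_power_bounded_density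
          inverse_power_bounded_square[OF inverse_power_bounded_u]]
        inverse_power_bounded_mult_1_1[OF inverse_power_bounded_hardy_coeff inverse_power_bounded_inverse_norm]]
    by (rule inverse_power_bounded_cong[rotated]) (simp add: flux_def)
qed (use support in \<open>simp add: flux_def\<close>)

lemma integrable_flux_div: "integrable lborel flux_div"
proof (rule integrable_if_bounded_near_pole[OF continuous_on_flux_div])
  have "inverse_power_bounded R 0 (\<lambda>y::real^'n. 2 * u y * radial_deriv u y)"
    using inverse_power_bounded_mult_left[OF inverse_power_bounded_cmult[OF inverse_power_bounded_u]
        inverse_power_bounded_radial_deriv] .
  then have "inverse_power_bounded R 1 (\<lambda>y::real^'n. 2 * u y * radial_deriv u y)"
    by (rule inverse_power_bounded_mono[OF _ _ R_pos]) simp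
  with inverse_power_bounded_mult_right[OF inverse_power_bounded_cmult[OF inverse_power_bounded_log_deriv_psi]
      inverse_power_bounded_square[OF inverse_power_bounded_u]]
  have "inverse_power_bounded R 1 (\<lambda>y::real^'n. (real CARD('n) - 1) * (deriv \<psi> (norm y) / \<psi> (norm y))
      * (u y)\<^sup>2 + 2 * u y * radial_deriv u y)"
    by (rule inverse_power_bounded_add)
  from inverse_power_bounded_add[OF inverse_power_bounded_mult_1_1[OF this inverse_power_bounded_hardy_coeff]
      inverse_power_bounded_mult_left[OF inverse_power_bounded_square[OF inverse_power_bounded_u]
        inverse_power_bounded_hardy_coeff_deriv]]
  show "inverse_power_bounded R 2 flux_div"
    unfolding flux_div_def[abs_def] by (rule inverse_power_bounded_mult_left[OF inverse_power_bounded_density])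
qed (use support in \<open>simp add: flux_div_def radial_deriv_eq_inner[OF u_differentiable]\<close>)

lemma integral_flux_div_eq_0: "(\<integral>x. flux_div x \<partial>lborel) = 0"
proof (rule lborel_integral_eq_0_if_radial_primitive[OF integrable_flux integrable_flux_div
      continuous_on_flux_div])
  fix x :: "real ^ 'n" and t :: real
  assume "x \<noteq> 0" "1 \<le> t" "t \<le> 2"
  then show "((\<lambda>t. t ^ DIM(real ^ 'n) * flux (t *\<^sub>R x)) has_real_derivative
      t ^ (DIM(real ^ 'n) - 1) * flux_div (t *\<^sub>R x)) (at t)"
    using has_real_derivative_flux_ray[of t x] by simp
qed

lemma hardy_inequality:
  "model_integral \<psi> (model_grad_sq \<psi> u)
     + (real CARD('n) - 1) / 4 *
       model_integral \<psi> (\<lambda>x. (2 * K_rad \<psi> (norm x) + (real CARD('n) - 3) * H_tan \<psi> (norm x)) * (u x)\<^sup>2)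
   \<ge> 1 / 4 * model_integral \<psi> (\<lambda>x. (u x)\<^sup>2 / (norm x)\<^sup>2)
     + (real CARD('n) - 1) * (real CARD('n) - 3) / 4 *
       model_integral \<psi> (\<lambda>x. (u x)\<^sup>2 / (\<psi> (norm x))\<^sup>2)"
proof -
  note integrable = integrable_energy integrable_curvature_term integrable_hardy_term
    integrable_tangential_term
  have "0 = (\<integral>x. flux_div x \<partial>lborel)" using integral_flux_div_eq_0 ..
  also have "\<dots> \<le> (\<integral>x. hardy_integrand x \<partial>lborel)"
  proof (rule integral_mono_AE[OF integrable_flux_div])
    show "integrable lborel hardy_integrand"
      unfolding hardy_integrand_def[abs_def]
      by (intro Bochner_Integration.integrable_diff Bochner_Integration.integrable_add
          integrable_mult_right integrable)
    show "AE x in lborel. flux_div x \<le> hardy_integrand x"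
      using AE_lborel_singleton[of 0] by eventually_elim (rule flux_div_le_hardy_integrand)
  qed
  also have "\<dots> = model_integral \<psi> (model_grad_sq \<psi> u)
     + (real CARD('n) - 1) / 4 *
       model_integral \<psi> (\<lambda>x. (2 * K_rad \<psi> (norm x) + (real CARD('n) - 3) * H_tan \<psi> (norm x)) * (u x)\<^sup>2)
     - (1 / 4 * model_integral \<psi> (\<lambda>x. (u x)\<^sup>2 / (norm x)\<^sup>2)
       + (real CARD('n) - 1) * (real CARD('n) - 3) / 4 *
         model_integral \<psi> (\<lambda>x. (u x)\<^sup>2 / (\<psi> (norm x))\<^sup>2))"
    unfolding hardy_integrand_def[abs_def] model_integral_def
    by (simp only: Bochner_Integration.integral_diff Bochner_Integration.integral_add
        integral_mult_right_zero Bochner_Integration.integrable_diff Bochner_Integration.integrable_add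
        integrable_mult_right integrable)
  finally show ?thesis by simp
qed

end

context hardy_model
begin

lemma exists_hardy_model_bounded:
  assumes "\<psi> 0 = 0" "deriv \<psi> 0 > 0"
  obtains R c C M where "hardy_model_bounded \<psi> u R c C M"
proof -
  obtain R where R: "R > 0" and support: "\<And>y. R \<le> norm y \<Longrightarrow> u y = 0 \<and> eucl_grad u y = 0"
    using test_fun_vanishes_outside_ball[OF u_test] by blast
  obtain M1 where M1: "\<And>y. norm (u y) \<le> M1"
    using continuous_vanishing_outside_ball_bounded[of u R] continuous_on_compose_u(1)[OF continuous_on_id]
      support by blast
  obtain M2 where M2: "\<And>y. norm (eucl_grad u y) \<le> M2"
    using continuous_vanishing_outside_ball_bounded[of "eucl_grad u" R] continuous_on_eucl_grad[OF u_smooth]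
      support by blast
  obtain c where c: "c > 0" and lower: "\<And>s. 0 < s \<Longrightarrow> s \<le> R \<Longrightarrow> c * s \<le> \<psi> s"
    using lower_linear_bound_from_zero[OF psi_deriv continuous_on_dpsi assms psi_pos R] by blast
  obtain C1 where C1: "\<And>s. s \<in> {0..R} \<Longrightarrow> \<bar>deriv \<psi> s\<bar> \<le> C1"
    using continuous_on_interval_abs_bounded[OF continuous_on_subset[OF continuous_on_dpsi]] by blast
  obtain C2 where C2: "\<And>s. s \<in> {0..R} \<Longrightarrow> \<bar>deriv (deriv \<psi>) s\<bar> \<le> C2"
    using continuous_on_interval_abs_bounded[OF continuous_on_subset[OF continuous_on_ddpsi]] by blast
  have "hardy_model_bounded \<psi> u R c (max C1 C2) (max M1 M2)"
  proof
    fix s assume s: "0 < s" "s \<le> R"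
    have "\<bar>deriv \<psi> s'\<bar> \<le> max C1 C2" if "s' \<in> {0..R}" for s'
      using C1[OF that] by linarith
    then have "\<psi> s \<le> max C1 C2 * s"
      using upper_linear_bound_from_zero[OF psi_deriv \<open>\<psi> 0 = 0\<close> _ s] by blast
    then show "c * s \<le> \<psi> s \<and> \<psi> s \<le> max C1 C2 * s \<and> \<bar>deriv \<psi> s\<bar> \<le> max C1 C2
        \<and> \<bar>deriv (deriv \<psi>) s\<bar> \<le> max C1 C2"
      using lower[OF s] C1[of s] C2[of s] s by auto
  next
    show "\<bar>u y\<bar> \<le> max M1 M2 \<and> norm (eucl_grad u y) \<le> max M1 M2" for y
      using M1[of y] M2[of y] by auto
  qed (use R support c in auto)
  then show ?thesis using that by blast
qed

end

theorem proposition4p1: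
  fixes \<psi> :: "real \<Rightarrow> real" and u :: "real ^ 'n \<Rightarrow> real"
  assumes N3: "CARD('n) \<ge> 3"
    and psi_smooth: "smooth_fun \<psi>"
    and psi_nonneg: "\<And>r. r \<ge> 0 \<Longrightarrow> \<psi> r \<ge> 0"
    and psi_pos: "\<And>r. r > 0 \<Longrightarrow> \<psi> r > 0"
    and psi0: "\<psi> 0 = 0" and dpsi0: "deriv \<psi> 0 = 1" and ddpsi0: "deriv (deriv \<psi>) 0 = 0"
    and u: "test_fun u"
  shows "model_integral \<psi> (model_grad_sq \<psi> u)
         + (real CARD('n) - 1) / 4 *
           model_integral \<psi> (\<lambda>x. (2 * K_rad \<psi> (norm x) + (real CARD('n) - 3) * H_tan \<psi> (norm x)) * (u x)\<^sup>2)
       \<ge> 1 / 4 * model_integral \<psi> (\<lambda>x. (u x)\<^sup>2 / (norm x)\<^sup>2)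
         + (real CARD('n) - 1) * (real CARD('n) - 3) / 4 *
           model_integral \<psi> (\<lambda>x. (u x)\<^sup>2 / (\<psi> (norm x))\<^sup>2)"
proof -
  interpret hardy_model \<psi> u
    using N3 psi_smooth psi_pos u by unfold_locales
  have "deriv \<psi> 0 > 0" using dpsi0 by simp
  then obtain R c C M where "hardy_model_bounded \<psi> u R c C M"
    using exists_hardy_model_bounded[OF psi0] by blast
  then interpret hardy_model_bounded \<psi> u R c C M .
  show ?thesis by (rule hardy_inequality)
qed

end
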